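(* Let $M=(Q,R,X,\delta)$ be a rough finite state machine, and let $\delta^*$ and $\delta^{*D}$ be as defined in the context. Then for every $q\in Q$ and all words $x,y\in X^*$, $$\underline{\delta^*(q,xy)}=\underline{\delta^{*D}\big(\underline{\delta^*(q,x)},\,y\big)}\quad\text{and}\quad \overline{\delta^*(q,xy)}=\overline{\delta^{*D}\big(\overline{\delta^*(q,x)},\,y\big)}.$$
   Context: For a finite set $Q$ with an equivalence relation $R$ and $A\subseteq Q$, the lower approximation is $\underline{A}=\bigcup\{[x]\in Q/R: [x]\subseteq A\}$ and the upper approximation is $\overline{A}=\bigcup\{[x]\in Q/R:[x]\cap A\neq\emptyset\}$; the pair $(\underline A,\overline A)$ is the rough set of $A$. A set is definable if it is a union of $R$-classes. A rough finite state machine (RFSM) is a 4-tuple $M=(Q,R,X,\delta)$ where $Q$ is a nonempty finite set of states, $R$ is an equivalence relation on $Q$, $X$ is a nonempty finite set of inputs, and $\delta$ assigns to each $(q,a)\in Q\times X$ a pair $\delta(q,a)=(\underline{\delta(q,a)},\overline{\delta(q,a)})=(\underline{A},\overline{A})$ for some $A\subseteq Q$. $X^*$ denotes the set of finite words over $X$, with empty word $e$. Block transition: for a definable set $D\subseteq Q$ and $a\in X$, $\delta^D(D,a)=(\underline{\delta^D(D,a)},\overline{\delta^D(D,a)})$ with $\underline{\delta^D(D,a)}=\bigcup\{\underline{\delta(q,a)}: q\in B\subseteq D,\ B\in Q/R\}$ and $\overline{\delta^D(D,a)}=\bigcup\{\overline{\delta(q,a)}: q\in B\subseteq D,\ B\in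 Q/R\}$. Extended transition $\delta^*:Q\times X^*\to$ pairs of subsets of $Q$: $\delta^*(q,e)=([q],[q])$, and for $x\in X^*$, $a\in X$: $\underline{\delta^*(q,xa)}=\underline{\delta^D(\underline{\delta^*(q,x)},a)}$ and $\overline{\delta^*(q,xa)}=\overline{\delta^D(\overline{\delta^*(q,x)},a)}$. Extended block transition: for definable $D$ and $x\in X^*$, $\underline{\delta^{*D}(D,x)}=\bigcup\{\underline{\delta^*(q,x)}: q\in B\subseteq D,\ B\in Q/R\}$ and $\overline{\delta^{*D}(D,x)}=\bigcup\{\overline{\delta^*(q,x)}: q\in B\subseteq D,\ B\in Q/R\}$. *)

theory Defs
  imports Main
begin

definition lower_appr :: "'q set \<Rightarrow> ('q \<times> 'q) set \<Rightarrow> 'q set \<Rightarrow> 'q set" where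
  "lower_appr Q R A = \<Union>{B \<in> Q // R. B \<subseteq> A}"

definition upper_appr :: "'q set \<Rightarrow> ('q \<times> 'q) set \<Rightarrow> 'q set \<Rightarrow> 'q set" where
  "upper_appr Q R A = \<Union>{B \<in> Q // R. B \<inter> A \<noteq> {}}"

definition definable :: "'q set \<Rightarrow> ('q \<times> 'q) set \<Rightarrow> 'q set \<Rightarrow> bool" where
  "definable Q R D \<longleftrightarrow> (\<exists>\<B> \<subseteq> Q // R. D = \<Union>\<B>)"

definition rfsm :: "'q set \<Rightarrow> ('q \<times> 'q) set \<Rightarrow> 'a set \<Rightarrow> ('q \<Rightarrow> 'a \<Rightarrow> 'q set \<times> 'q set) \<Rightarrow> bool" where
  "rfsm Q R X \<delta> \<longleftrightarrow> Q \<noteq> {} \<and> finite Q \<and> equiv Q R \<and> X \<noteq> {} \<and> finite X \<and>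
     (\<forall>q\<in>Q. \<forall>a\<in>X. \<exists>A\<subseteq>Q. \<delta> q a = (lower_appr Q R A, upper_appr Q R A))"

definition block_lower :: "'q set \<Rightarrow> ('q \<times> 'q) set \<Rightarrow> ('q \<Rightarrow> 'a \<Rightarrow> 'q set \<times> 'q set) \<Rightarrow> 'q set \<Rightarrow> 'a \<Rightarrow> 'q set" where
  "block_lower Q R \<delta> D a = \<Union>{fst (\<delta> q a) | q B. q \<in> B \<and> B \<subseteq> D \<and> B \<in> Q // R}"

definition block_upper :: "'q set \<Rightarrow> ('q \<times> 'q) set \<Rightarrow> ('q \<Rightarrow> 'a \<Rightarrow> 'q set \<times> 'q set) \<Rightarrow> 'q set \<Rightarrow> 'a \<Rightarrow> 'q set" where
  "block_upper Q R \<delta> D a = \<Union>{snd (\<delta> q a) | q B. q \<in> B \<and> B \<subseteq> D \<and> B \<in> Q // R}"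

definition delta_star :: "'q set \<Rightarrow> ('q \<times> 'q) set \<Rightarrow> ('q \<Rightarrow> 'a \<Rightarrow> 'q set \<times> 'q set) \<Rightarrow> 'q \<Rightarrow> 'a list \<Rightarrow> 'q set \<times> 'q set" where
  "delta_star Q R \<delta> q w =
     foldl (\<lambda>(L, U) a. (block_lower Q R \<delta> L a, block_upper Q R \<delta> U a)) (R `` {q}, R `` {q}) w"

lemma delta_star_Nil: "delta_star Q R \<delta> q [] = (R `` {q}, R `` {q})"
  by (simp add: delta_star_def)

lemma delta_star_snoc:
  "delta_star Q R \<delta> q (x @ [a]) =
     (block_lower Q R \<delta> (fst (delta_star Q R \<delta> q x)) a, block_upper Q R \<delta> (snd (delta_star Q R \<delta> q x)) a)"
  by (simp add: delta_star_def split: prod.splits)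

definition ext_block_lower :: "'q set \<Rightarrow> ('q \<times> 'q) set \<Rightarrow> ('q \<Rightarrow> 'a \<Rightarrow> 'q set \<times> 'q set) \<Rightarrow> 'q set \<Rightarrow> 'a list \<Rightarrow> 'q set" where
  "ext_block_lower Q R \<delta> D x = \<Union>{fst (delta_star Q R \<delta> q x) | q B. q \<in> B \<and> B \<subseteq> D \<and> B \<in> Q // R}"

definition ext_block_upper :: "'q set \<Rightarrow> ('q \<times> 'q) set \<Rightarrow> ('q \<Rightarrow> 'a \<Rightarrow> 'q set \<times> 'q set) \<Rightarrow> 'q set \<Rightarrow> 'a list \<Rightarrow> 'q set" where
  "ext_block_upper Q R \<delta> D x = \<Union>{snd (delta_star Q R \<delta> q x) | q B. q \<in> B \<and> B \<subseteq> D \<and> B \<in> Q // R}"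

end

theory Submission
  imports Defs
begin

text \<open>A block transition only sees the classes contained in its argument, i.e. its lower
  approximation, and its results are definable. On a definable set D it is therefore the union
  of the block transitions of the classes of the states of D, and by induction on y the same holds
  for the iterated transition along y. Since each component of delta*(q,x) is definable, this
  splits delta*(q,xy) into the transitions delta*(p,y) for p in delta*(q,x).\<close>

definition block_step :: "'q set \<Rightarrow> ('q \<times> 'q) set \<Rightarrow> ('q \<Rightarrow> 'a \<Rightarrow> 'q set) \<Rightarrow> 'q set \<Rightarrow> 'a \<Rightarrow> 'q set" where
  "block_step Q R f S a = (\<Union>p\<in>lower_appr Q R S. f p a)"

lemma Union_over_classes_eq_UN_lower_appr:
  "\<Union>{f q | q B. q \<in> B \<and> B \<subseteq> D \<and> B \<in> Q // R} = (\<Union>q\<in>lower_appr Q R D. f q)"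
  unfolding lower_appr_def by blast

lemma block_lower_eq_block_step: "block_lower Q R \<delta> = block_step Q R (\<lambda>q a. fst (\<delta> q a))"
  unfolding block_lower_def block_step_def Union_over_classes_eq_UN_lower_appr ..

lemma block_upper_eq_block_step: "block_upper Q R \<delta> = block_step Q R (\<lambda>q a. snd (\<delta> q a))"
  unfolding block_upper_def block_step_def Union_over_classes_eq_UN_lower_appr ..

lemma ext_block_lower_eq_UN:
  "ext_block_lower Q R \<delta> D y = (\<Union>p\<in>lower_appr Q R D. fst (delta_star Q R \<delta> p y))"
  unfolding ext_block_lower_def Union_over_classes_eq_UN_lower_appr ..

lemma ext_block_upper_eq_UN:
  "ext_block_upper Q R \<delta> D y = (\<Union>p\<in>lower_appr Q R D. snd (delta_star Q R \<delta> p y))"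
  unfolding ext_block_upper_def Union_over_classes_eq_UN_lower_appr ..

lemma foldl_pair_map:
  "foldl (\<lambda>(L, U) a. (f L a, g U a)) (L0, U0) w = (foldl f L0 w, foldl g U0 w)"
  by (induction w arbitrary: L0 U0) simp_all

lemma fst_delta_star:
  "fst (delta_star Q R \<delta> q w) = foldl (block_step Q R (\<lambda>q a. fst (\<delta> q a))) (R `` {q}) w"
  by (simp add: delta_star_def foldl_pair_map block_lower_eq_block_step)

lemma snd_delta_star:
  "snd (delta_star Q R \<delta> q w) = foldl (block_step Q R (\<lambda>q a. snd (\<delta> q a))) (R `` {q}) w"
  by (simp add: delta_star_def foldl_pair_map block_upper_eq_block_step)

lemma definable_subset:
  assumes "equiv Q R" "definable Q R D"
  shows "D \<subseteq> Q"
  using assms in_quotient_imp_subset unfolding definable_def by blast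

lemma definable_class:
  assumes "q \<in> Q"
  shows "definable Q R (R `` {q})"
  unfolding definable_def using assms by (intro exI[of _ "{R `` {q}}"]) (auto intro: quotientI)

lemma definable_UN:
  assumes "\<forall>i\<in>I. definable Q R (f i)"
  shows "definable Q R (\<Union>i\<in>I. f i)"
proof -
  from assms obtain \<B> where "\<forall>i\<in>I. \<B> i \<subseteq> Q // R \<and> f i = \<Union>(\<B> i)"
    unfolding definable_def by metis
  then show ?thesis
    unfolding definable_def by (intro exI[of _ "\<Union>i\<in>I. \<B> i"]) auto
qed

lemma lower_appr_definable: "definable Q R (lower_appr Q R A)"
  unfolding definable_def lower_appr_def by (intro exI[of _ "{B \<in> Q // R. B \<subseteq> A}"]) auto

lemma upper_appr_definable: "definable Q R (upper_appr Q R A)"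
  unfolding definable_def upper_appr_def by (intro exI[of _ "{B \<in> Q // R. B \<inter> A \<noteq> {}}"]) auto

lemma lower_appr_definable_eq:
  assumes "definable Q R D"
  shows "lower_appr Q R D = D"
  using assms unfolding definable_def lower_appr_def by blast

lemma UN_classes_definable:
  assumes "equiv Q R" "definable Q R D"
  shows "(\<Union>q\<in>D. R `` {q}) = D"
proof
  obtain \<B> where \<B>: "\<B> \<subseteq> Q // R" "D = \<Union>\<B>"
    using assms(2) unfolding definable_def by blast
  have "R `` {q} = B" if q: "q \<in> B" and B: "B \<in> \<B>" for q B
  proof -
    obtain b where "B = R `` {b}"
      using B \<B>(1) by (auto elim: quotientE)
    with q show ?thesis
      using equiv_class_eq[OF assms(1)] by blast
  qed
  then show "(\<Union>q\<in>D. R `` {q}) \<subseteq> D"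
    unfolding \<B>(2) by blast
  show "D \<subseteq> (\<Union>q\<in>D. R `` {q})"
    using equiv_class_self[OF assms(1)] definable_subset[OF assms] by blast
qed

context
  fixes Q :: "'q set" and R :: "('q \<times> 'q) set" and X :: "'a set" and f :: "'q \<Rightarrow> 'a \<Rightarrow> 'q set"
  assumes equiv: "equiv Q R"
    and f_definable: "\<forall>q\<in>Q. \<forall>a\<in>X. definable Q R (f q a)"
begin

lemma block_step_definable:
  assumes "a \<in> X"
  shows "definable Q R (block_step Q R f S a)"
proof -
  have "lower_appr Q R S \<subseteq> Q"
    using definable_subset[OF equiv lower_appr_definable] .
  then show ?thesis
    unfolding block_step_def using f_definable assms by (blast intro: definable_UN)
qed

lemma block_step_eq_UN_classes:
  assumes "definable Q R D"
  shows "block_step Q R f D a = (\<Union>q\<in>D. block_step Q R f (R `` {q}) a)"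
proof -
  have "block_step Q R f (R `` {q}) a = (\<Union>p\<in>R `` {q}. f p a)" if "q \<in> D" for q
    using that definable_subset[OF equiv assms]
    by (simp add: block_step_def lower_appr_definable_eq[OF definable_class] subset_iff)
  then have "(\<Union>q\<in>D. block_step Q R f (R `` {q}) a) = (\<Union>q\<in>D. \<Union>p\<in>R `` {q}. f p a)"
    by simp
  also have "\<dots> = (\<Union>p\<in>(\<Union>q\<in>D. R `` {q}). f p a)"
    by blast
  finally show ?thesis
    by (simp add: block_step_def lower_appr_definable_eq[OF assms] UN_classes_definable[OF equiv assms])
qed

lemma foldl_block_step_definable:
  assumes "definable Q R D" "y \<in> lists X"
  shows "definable Q R (foldl (block_step Q R f) D y)"
  using assms by (induction y arbitrary: D) (auto intro: block_step_definable)

lemma foldl_block_step_eq_UN_classes: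
  assumes "definable Q R D" "y \<in> lists X"
  shows "foldl (block_step Q R f) D y = (\<Union>q\<in>D. foldl (block_step Q R f) (R `` {q}) y)"
  using assms
proof (induction y arbitrary: D)
  case Nil
  then show ?case by (simp add: UN_classes_definable[OF equiv])
next
  case (Cons a y)
  let ?step = "\<lambda>S. block_step Q R f S a"
  have a: "a \<in> X" "y \<in> lists X" using Cons.prems(2) by auto
  have "foldl (block_step Q R f) D (a # y) = (\<Union>p\<in>?step D. foldl (block_step Q R f) (R `` {p}) y)"
    using Cons.IH[OF block_step_definable[OF a(1)] a(2)] by simp
  also have "\<dots> = (\<Union>q\<in>D. \<Union>p\<in>?step (R `` {q}). foldl (block_step Q R f) (R `` {p}) y)"
    by (simp add: block_step_eq_UN_classes[OF Cons.prems(1)])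
  also have "\<dots> = (\<Union>q\<in>D. foldl (block_step Q R f) (R `` {q}) (a # y))"
    using Cons.IH[OF block_step_definable[OF a(1)] a(2)] by simp
  finally show ?case .
qed

lemma foldl_block_step_append:
  assumes "q \<in> Q" "x \<in> lists X" "y \<in> lists X"
  shows "foldl (block_step Q R f) (R `` {q}) (x @ y)
           = (\<Union>p\<in>lower_appr Q R (foldl (block_step Q R f) (R `` {q}) x).
                foldl (block_step Q R f) (R `` {p}) y)"
proof -
  have "definable Q R (foldl (block_step Q R f) (R `` {q}) x)"
    using foldl_block_step_definable[OF definable_class[OF assms(1)] assms(2)] .
  then show ?thesis
    by (simp add: lower_appr_definable_eq foldl_block_step_eq_UN_classes[OF _ assms(3)])
qed

end

theorem lemma2p1:
  assumes "rfsm Q R X \<delta>" and "q \<in> Q" and "x \<in> lists X" and "y \<in> lists X"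
  shows "fst (delta_star Q R \<delta> q (x @ y)) =
           ext_block_lower Q R \<delta> (fst (delta_star Q R \<delta> q x)) y
       \<and> snd (delta_star Q R \<delta> q (x @ y)) =
           ext_block_upper Q R \<delta> (snd (delta_star Q R \<delta> q x)) y"
proof -
  have equiv: "equiv Q R" using assms(1) by (simp add: rfsm_def)
  have "\<forall>q\<in>Q. \<forall>a\<in>X. definable Q R (fst (\<delta> q a)) \<and> definable Q R (snd (\<delta> q a))"
    using assms(1) lower_appr_definable upper_appr_definable unfolding rfsm_def by fastforce
  then have "\<forall>q\<in>Q. \<forall>a\<in>X. definable Q R (fst (\<delta> q a))"
    and "\<forall>q\<in>Q. \<forall>a\<in>X. definable Q R (snd (\<delta> q a))"
    by auto
  from this[THEN foldl_block_step_append[OF equiv _ assms(2-4)]] show ?thesis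
    by (simp add: fst_delta_star snd_delta_star ext_block_lower_eq_UN ext_block_upper_eq_UN)
qed

end
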